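(* Let $f:\mathbb{R}^n\to\mathbb{R}$ be continuously differentiable, convex and $L$-smooth with unique minimizer $0$ and $f(0)=0$. Let $g:\mathbb{R}^n\to\mathbb{R}$ be continuously differentiable and strictly convex with Bregman divergence $D_g(y,x)=g(y)-g(x)-\langle\nabla g(x),y-x\rangle$. Let $\alpha,\beta:[0,\infty)\to\mathbb{R}$ satisfy $e^{\alpha(t)}\ge\dot\beta(t)>0$ for all $t$ and $\beta(t)\to\infty$ as $t\to\infty$. (i) (Convex case, $\mu=0$.) Let $Z:[0,\infty)\to\mathbb{R}^n$ solve $\frac{d}{dt}\nabla g(Z)=-e^{\alpha(t)+\beta(t)}\nabla f(Z)$, and set $\tilde{\mathcal{E}}(t)=D_g(0,Z(t))+e^{\beta(t)}f(Z(t))$. (ii) (Uniformly convex case.) Suppose $f$ is $\mu$-uniformly convex with respect to $g$ for some $\mu>0$, i.e. $D_f(x,y)\ge\mu D_g(x,y)$ for all $x,y$. Let $Z:[0,\infty)\to\mathbb{R}^n$ solve $\frac{d}{dt}\nabla g(Z)=-\frac{e^{\alpha(t)}}{\mu}\nabla f(Z)$, and set $\tilde{\mathcal{E}}(t)=e^{\beta(t)}\big(\mu D_g(0,Z(t))+f(Z(t))\big)$. Then in both cases $\tilde{\mathcal{E}}$ is monotonically non-increasing and $f(Z(t))\le e^{-\beta(t)}\tilde{\mathcal{E}}(0)$ for all $t\ge0$.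
   Context: $D_f$ denotes the Bregman divergence of $f$, defined analogously to $D_g$. *)

theory Defs
  imports "HOL-Analysis.Analysis"
begin

definition strict_convex_on :: "'a::real_vector set \<Rightarrow> ('a \<Rightarrow> real) \<Rightarrow> bool" where
  "strict_convex_on S f \<longleftrightarrow>
     (\<forall>x\<in>S. \<forall>y\<in>S. x \<noteq> y \<longrightarrow> (\<forall>u::real. 0 < u \<and> u < 1 \<longrightarrow>
        f ((1 - u) *\<^sub>R x + u *\<^sub>R y) < (1 - u) * f x + u * f y))"

definition bregman :: "('a::real_inner \<Rightarrow> real) \<Rightarrow> ('a \<Rightarrow> 'a) \<Rightarrow> 'a \<Rightarrow> 'a \<Rightarrow> real" where
  "bregman \<phi> grad\<phi> y x = \<phi> y - \<phi> x - grad\<phi> x \<bullet> (y - x)"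

end

theory Submission
  imports Defs
begin

text \<open>Along the mirror flow \<open>d/dt \<nabla>g(Z) = -c(t) \<nabla>f(Z)\<close> with \<open>c > 0\<close>, the Bregman distance
  \<open>D\<^sub>g(0, Z)\<close> to the minimiser changes at rate \<open>-c \<langle>\<nabla>f(Z), Z\<rangle>\<close>, and convexity of \<open>f\<close> (resp.
  uniform convexity with respect to \<open>g\<close>) bounds \<open>\<langle>\<nabla>f(Z), Z\<rangle>\<close> below by \<open>f(Z)\<close>
  (resp. \<open>f(Z) + \<mu> D\<^sub>g(0, Z)\<close>). Moreover \<open>f(Z)\<close> does not increase, because monotonicity of
  \<open>\<nabla>g\<close> makes \<open>\<langle>d/dt \<nabla>g(Z), dZ/dt\<rangle> \<ge> 0\<close>. Together with \<open>\<beta>' \<le> e\<^sup>\<alpha>\<close> this makes the energy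
  nonincreasing, and since it dominates \<open>e\<^sup>\<beta> f(Z)\<close> the rate follows.\<close>

lemma convex_on_has_derivative_above_tangent:
  fixes f :: "'a::real_normed_vector \<Rightarrow> real"
  assumes convex: "convex_on UNIV f" and deriv: "(f has_derivative f') (at x)"
  shows "f x + f' (y - x) \<le> f y"
proof -
  define h where "h u = f (x + u *\<^sub>R (y - x))" for u :: real
  have "convex_on UNIV h"
  proof (rule convex_onI)
    fix t a b :: real assume "0 < t" "t < 1"
    moreover have "x + ((1 - t) * a + t * b) *\<^sub>R (y - x) =
        (1 - t) *\<^sub>R (x + a *\<^sub>R (y - x)) + t *\<^sub>R (x + b *\<^sub>R (y - x))"
      by (simp add: algebra_simps)
    ultimately show "h ((1 - t) *\<^sub>R a + t *\<^sub>R b) \<le> (1 - t) * h a + t * h b"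
      unfolding h_def using convex_onD[OF convex, of t] by simp
  qed simp
  moreover have "(h has_real_derivative f' (y - x)) (at 0)"
  proof -
    have "((\<lambda>u. x + u *\<^sub>R (y - x)) has_derivative (\<lambda>u. u *\<^sub>R (y - x))) (at 0)"
      by (auto intro!: derivative_eq_intros)
    then have "(h has_derivative (\<lambda>u. f' (u *\<^sub>R (y - x)))) (at 0)"
      unfolding h_def by (rule has_derivative_compose) (simp add: deriv)
    then show ?thesis
      by (rule has_derivative_imp_has_field_derivative)
        (simp add: linear_cmul[OF has_derivative_linear[OF deriv]])
  qed
  ultimately have "h 1 - h 0 \<ge> f' (y - x) * (1 - 0)"
    by (intro convex_on_imp_above_tangent) auto
  then show ?thesis by (simp add: h_def)
qed

lemma strict_convex_on_imp_convex_on: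
  assumes "convex S" and "strict_convex_on S g"
  shows "convex_on S g"
proof (intro convex_onI assms(1))
  fix t x y assume "x \<in> S" "y \<in> S" "0 < (t::real)" "t < 1"
  then show "g ((1 - t) *\<^sub>R x + t *\<^sub>R y) \<le> (1 - t) * g x + t * g y"
    using assms(2) unfolding strict_convex_on_def
    by (cases "x = y") (auto simp: algebra_simps intro: less_imp_le)
qed

lemma bregman_nonneg:
  assumes "convex_on UNIV \<phi>" and "(\<phi> has_derivative (\<lambda>h. grad\<phi> x \<bullet> h)) (at x)"
  shows "0 \<le> bregman \<phi> grad\<phi> y x"
  using convex_on_has_derivative_above_tangent[OF assms, of y] by (simp add: bregman_def)

lemma bregman_add_bregman_swap:
  "bregman \<phi> grad\<phi> x y + bregman \<phi> grad\<phi> y x = (grad\<phi> x - grad\<phi> y) \<bullet> (x - y)"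
  by (simp add: bregman_def algebra_simps)

lemma convex_on_gradient_monotone:
  assumes "convex_on UNIV \<phi>" and "\<And>x. (\<phi> has_derivative (\<lambda>h. grad\<phi> x \<bullet> h)) (at x)"
  shows "0 \<le> (grad\<phi> x - grad\<phi> y) \<bullet> (x - y)"
proof -
  have "0 \<le> bregman \<phi> grad\<phi> x y + bregman \<phi> grad\<phi> y x"
    by (intro add_nonneg_nonneg bregman_nonneg assms)
  then show ?thesis by (simp only: bregman_add_bregman_swap)
qed

lemma has_vector_derivative_iff_difference_quotient:
  fixes f :: "real \<Rightarrow> 'a::real_normed_vector"
  shows "(f has_vector_derivative D) (at x within S) \<longleftrightarrow>
    ((\<lambda>y. (f y - f x) /\<^sub>R (y - x)) \<longlongrightarrow> D) (at x within S)"
proof -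
  have "norm (f y - f x - (y - x) *\<^sub>R D) / norm (y - x) = norm ((f y - f x) /\<^sub>R (y - x) - D)"
    if "y \<noteq> x" for y
  proof -
    have "(f y - f x - (y - x) *\<^sub>R D) /\<^sub>R (y - x) = (f y - f x) /\<^sub>R (y - x) - D"
      using that by (simp add: scaleR_diff_right)
    from this[symmetric] show ?thesis by (simp add: divide_inverse_commute)
  qed
  then have "((\<lambda>y. norm (f y - f x - (y - x) *\<^sub>R D) / norm (y - x)) \<longlongrightarrow> 0) (at x within S)
      \<longleftrightarrow> ((\<lambda>y. norm ((f y - f x) /\<^sub>R (y - x) - D)) \<longlongrightarrow> 0) (at x within S)"
    by (intro Lim_cong_within) auto
  then show ?thesis
    by (simp add: has_vector_derivative_def has_derivative_iff_norm bounded_linear_scaleR_left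
        tendsto_norm_zero_iff LIM_zero_iff)
qed

lemma has_vector_derivative_inner_nonneg:
  fixes G Z :: "real \<Rightarrow> 'a::real_inner"
  assumes G: "(G has_vector_derivative v) (at t within S)"
    and Z: "(Z has_vector_derivative w) (at t within S)"
    and right: "{t<..} \<subseteq> S"
    and increments: "\<And>s. t < s \<Longrightarrow> 0 \<le> (G s - G t) \<bullet> (Z s - Z t)"
  shows "0 \<le> v \<bullet> w"
proof -
  have "at_right t \<le> at t within S" using right by (rule at_le)
  then have "((\<lambda>s. ((G s - G t) /\<^sub>R (s - t)) \<bullet> ((Z s - Z t) /\<^sub>R (s - t))) \<longlongrightarrow> v \<bullet> w) (at_right t)"
    using G Z unfolding has_vector_derivative_iff_difference_quotient
    by (intro tendsto_inner) (auto elim: tendsto_mono)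
  moreover have "\<forall>\<^sub>F s in at_right t. 0 \<le> ((G s - G t) /\<^sub>R (s - t)) \<bullet> ((Z s - Z t) /\<^sub>R (s - t))"
  proof (rule eventually_at_rightI[of t "t + 1"])
    fix s assume "s \<in> {t<..<t + 1}"
    then show "0 \<le> ((G s - G t) /\<^sub>R (s - t)) \<bullet> ((Z s - Z t) /\<^sub>R (s - t))"
      using increments[of s] by (simp add: divide_inverse_commute)
  qed simp
  ultimately show ?thesis by (rule tendsto_lowerbound) simp
qed

lemma has_real_derivative_gradient_compose:
  assumes "(f has_derivative (\<lambda>h. d \<bullet> h)) (at (Z t))"
    and "(Z has_vector_derivative w) (at t within S)"
  shows "((\<lambda>s. f (Z s)) has_real_derivative d \<bullet> w) (at t within S)"
  using has_derivative_compose[OF assms(2)[unfolded has_vector_derivative_def] assms(1)]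
  by (rule has_derivative_imp_has_field_derivative) simp

lemma bregman_has_real_derivative:
  assumes grad: "\<And>x. (g has_derivative (\<lambda>h. gradg x \<bullet> h)) (at x)"
    and Z: "(Z has_vector_derivative w) (at t within S)"
    and gradZ: "((\<lambda>s. gradg (Z s)) has_vector_derivative v) (at t within S)"
  shows "((\<lambda>s. bregman g gradg y (Z s)) has_real_derivative v \<bullet> (Z t - y)) (at t within S)"
proof -
  have gZ: "((\<lambda>s. g (Z s)) has_real_derivative gradg (Z t) \<bullet> w) (at t within S)"
    by (rule has_real_derivative_gradient_compose[OF grad Z])
  have "((\<lambda>s. g y - g (Z s) - gradg (Z s) \<bullet> (y - Z s)) has_real_derivative
      0 - gradg (Z t) \<bullet> w - (gradg (Z t) \<bullet> (0 - w) + v \<bullet> (y - Z t))) (at t within S)"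
    using gZ unfolding has_real_derivative_iff_has_vector_derivative
    by (intro has_vector_derivative_diff has_vector_derivative_const
        bounded_bilinear.has_vector_derivative[OF bounded_bilinear_inner] gradZ Z)
  then show ?thesis
    by (simp add: bregman_def inner_diff_right)
qed

lemma DERIV_nonpos_imp_decreasing_atLeast:
  fixes E :: "real \<Rightarrow> real"
  assumes deriv: "\<And>t. a \<le> t \<Longrightarrow> \<exists>D. (E has_real_derivative D) (at t within {a..}) \<and> D \<le> 0"
    and "a \<le> s" "s \<le> t"
  shows "E t \<le> E s"
proof (rule DERIV_nonpos_imp_decreasing_open[OF \<open>s \<le> t\<close>])
  fix x assume x: "s < x" "x < t"
  then have "a \<le> x" using \<open>a \<le> s\<close> by simp
  then obtain D where D: "(E has_real_derivative D) (at x within {a..})" "D \<le> 0"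
    using deriv by blast
  have "at x within {a..} = at x"
    using x \<open>a \<le> s\<close> by (intro at_within_interior) auto
  then show "\<exists>D. (E has_real_derivative D) (at x) \<and> D \<le> 0"
    using D by auto
next
  have "continuous (at x within {a..}) E" if "a \<le> x" for x
    using deriv[OF that] DERIV_continuous by blast
  then have "continuous_on {a..} E"
    by (simp add: continuous_on_eq_continuous_within)
  then show "continuous_on {s..t} E"
    by (rule continuous_on_subset) (use \<open>a \<le> s\<close> in auto)
qed

lemma mirror_flow_descent:
  fixes Z :: "real \<Rightarrow> 'a::real_inner"
  assumes "convex_on UNIV g" and "\<And>x. (g has_derivative (\<lambda>h. gradg x \<bullet> h)) (at x)"
    and Z: "(Z has_vector_derivative w) (at t within S)" and "{t<..} \<subseteq> S"
    and flow: "((\<lambda>s. gradg (Z s)) has_vector_derivative - c *\<^sub>R d) (at t within S)"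
    and "0 < c"
  shows "d \<bullet> w \<le> 0"
proof -
  have "0 \<le> (- c *\<^sub>R d) \<bullet> w"
    using flow Z \<open>{t<..} \<subseteq> S\<close> convex_on_gradient_monotone[OF assms(1,2)]
    by (rule has_vector_derivative_inner_nonneg)
  with \<open>0 < c\<close> show ?thesis
    by (simp add: mult_le_0_iff)
qed

lemma le_exp_neg_mult_if_exp_mult_le:
  fixes y e :: real
  assumes "exp b * y \<le> e"
  shows "y \<le> exp (- b) * e"
  using mult_left_mono[OF assms, of "exp (- b)"] by (simp add: exp_minus field_simps)

lemma mirror_flow_energy_convex:
  fixes f g :: "'a::real_inner \<Rightarrow> real" and Z :: "real \<Rightarrow> 'a"
  assumes f_grad: "\<And>x. (f has_derivative (\<lambda>h. gradf x \<bullet> h)) (at x)"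
    and f_convex: "convex_on UNIV f" and f_nonneg: "\<And>x. 0 \<le> f x" and f_zero: "f 0 = 0"
    and g_grad: "\<And>x. (g has_derivative (\<lambda>h. gradg x \<bullet> h)) (at x)"
    and g_convex: "convex_on UNIV g"
    and \<beta>_deriv: "\<And>t. 0 \<le> t \<Longrightarrow> (\<beta> has_real_derivative d\<beta> t) (at t within {0..})"
    and d\<beta>_le: "\<And>t. 0 \<le> t \<Longrightarrow> d\<beta> t \<le> exp (\<alpha> t)"
    and Z_diff: "\<And>t. 0 \<le> t \<Longrightarrow> Z differentiable (at t within {0..})"
    and flow: "\<And>t. 0 \<le> t \<Longrightarrow> ((\<lambda>s. gradg (Z s)) has_vector_derivative
                  (- exp (\<alpha> t + \<beta> t)) *\<^sub>R gradf (Z t)) (at t within {0..})"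
  defines "E \<equiv> \<lambda>t. bregman g gradg 0 (Z t) + exp (\<beta> t) * f (Z t)"
  shows "(\<forall>s t. 0 \<le> s \<longrightarrow> s \<le> t \<longrightarrow> E t \<le> E s) \<and> (\<forall>t\<ge>0. f (Z t) \<le> exp (- \<beta> t) * E 0)"
proof -
  have decreasing: "E t \<le> E s" if "0 \<le> s" "s \<le> t" for s t
  proof (rule DERIV_nonpos_imp_decreasing_atLeast[OF _ that])
    fix t :: real assume "0 \<le> t"
    define w where "w = vector_derivative Z (at t within {0..})"
    have Z: "(Z has_vector_derivative w) (at t within {0..})"
      using Z_diff[OF \<open>0 \<le> t\<close>] unfolding w_def by (rule vector_derivative_works[THEN iffD1])
    let ?c = "exp (\<alpha> t + \<beta> t)" and ?d = "gradf (Z t)"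
    have descent: "?d \<bullet> w \<le> 0"
      by (rule mirror_flow_descent[OF g_convex g_grad Z _ flow[OF \<open>0 \<le> t\<close>]])
        (use \<open>0 \<le> t\<close> in auto)
    have "(E has_real_derivative
        (- ?c *\<^sub>R ?d) \<bullet> (Z t - 0) + (exp (\<beta> t) * d\<beta> t * f (Z t) + ?d \<bullet> w * exp (\<beta> t)))
        (at t within {0..})"
      unfolding E_def
      by (intro DERIV_add DERIV_mult bregman_has_real_derivative[OF g_grad Z flow]
          has_real_derivative_gradient_compose[OF f_grad[of "Z t"] Z] DERIV_chain2[OF DERIV_exp \<beta>_deriv]
          \<open>0 \<le> t\<close>)
    moreover have "(- ?c *\<^sub>R ?d) \<bullet> (Z t - 0) + (exp (\<beta> t) * d\<beta> t * f (Z t) + ?d \<bullet> w * exp (\<beta> t)) \<le> 0"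
    proof -
      have "0 \<le> bregman f gradf 0 (Z t)" by (rule bregman_nonneg[OF f_convex f_grad])
      then have "f (Z t) \<le> ?d \<bullet> Z t" using f_zero by (simp add: bregman_def)
      then have "?c * f (Z t) \<le> ?c * (?d \<bullet> Z t)" by simp
      moreover have "exp (\<beta> t) * d\<beta> t * f (Z t) \<le> ?c * f (Z t)"
        using d\<beta>_le[OF \<open>0 \<le> t\<close>] f_nonneg[of "Z t"] by (simp add: exp_add mult_right_mono)
      moreover have "?d \<bullet> w * exp (\<beta> t) \<le> 0"
        using descent by (simp add: mult_nonpos_nonneg)
      moreover have "(- ?c *\<^sub>R ?d) \<bullet> (Z t - 0) = - (?c * (?d \<bullet> Z t))" by simp
      ultimately show ?thesis by linarith
    qed
    ultimately show "\<exists>D. (E has_real_derivative D) (at t within {0..}) \<and> D \<le> 0" by blast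
  qed
  moreover have "f (Z t) \<le> exp (- \<beta> t) * E 0" if "0 \<le> t" for t
  proof (rule le_exp_neg_mult_if_exp_mult_le)
    have "0 \<le> bregman g gradg 0 (Z t)" by (rule bregman_nonneg[OF g_convex g_grad])
    then have "exp (\<beta> t) * f (Z t) \<le> E t" unfolding E_def by simp
    also have "\<dots> \<le> E 0" using decreasing that by simp
    finally show "exp (\<beta> t) * f (Z t) \<le> E 0" .
  qed
  ultimately show ?thesis by blast
qed

lemma mirror_flow_energy_uniformly_convex:
  fixes f g :: "'a::real_inner \<Rightarrow> real" and Z :: "real \<Rightarrow> 'a"
  assumes f_grad: "\<And>x. (f has_derivative (\<lambda>h. gradf x \<bullet> h)) (at x)"
    and f_nonneg: "\<And>x. 0 \<le> f x" and f_zero: "f 0 = 0"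
    and g_grad: "\<And>x. (g has_derivative (\<lambda>h. gradg x \<bullet> h)) (at x)"
    and g_convex: "convex_on UNIV g"
    and \<mu>_pos: "0 < \<mu>"
    and uniformly_convex: "\<And>x y. \<mu> * bregman g gradg x y \<le> bregman f gradf x y"
    and \<beta>_deriv: "\<And>t. 0 \<le> t \<Longrightarrow> (\<beta> has_real_derivative d\<beta> t) (at t within {0..})"
    and d\<beta>_le: "\<And>t. 0 \<le> t \<Longrightarrow> d\<beta> t \<le> exp (\<alpha> t)"
    and Z_diff: "\<And>t. 0 \<le> t \<Longrightarrow> Z differentiable (at t within {0..})"
    and flow: "\<And>t. 0 \<le> t \<Longrightarrow> ((\<lambda>s. gradg (Z s)) has_vector_derivative
                  (- (exp (\<alpha> t) / \<mu>)) *\<^sub>R gradf (Z t)) (at t within {0..})"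
  defines "E \<equiv> \<lambda>t. exp (\<beta> t) * (\<mu> * bregman g gradg 0 (Z t) + f (Z t))"
  shows "(\<forall>s t. 0 \<le> s \<longrightarrow> s \<le> t \<longrightarrow> E t \<le> E s) \<and> (\<forall>t\<ge>0. f (Z t) \<le> exp (- \<beta> t) * E 0)"
proof -
  have decreasing: "E t \<le> E s" if "0 \<le> s" "s \<le> t" for s t
  proof (rule DERIV_nonpos_imp_decreasing_atLeast[OF _ that])
    fix t :: real assume "0 \<le> t"
    define w where "w = vector_derivative Z (at t within {0..})"
    have Z: "(Z has_vector_derivative w) (at t within {0..})"
      using Z_diff[OF \<open>0 \<le> t\<close>] unfolding w_def by (rule vector_derivative_works[THEN iffD1])
    let ?c = "exp (\<alpha> t) / \<mu>" and ?d = "gradf (Z t)"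
    let ?P = "\<mu> * bregman g gradg 0 (Z t) + f (Z t)"
    have descent: "?d \<bullet> w \<le> 0"
      by (rule mirror_flow_descent[OF g_convex g_grad Z _ flow[OF \<open>0 \<le> t\<close>]])
        (use \<open>0 \<le> t\<close> \<mu>_pos in auto)
    have "(E has_real_derivative
        exp (\<beta> t) * d\<beta> t * ?P + (\<mu> * ((- ?c *\<^sub>R ?d) \<bullet> (Z t - 0)) + ?d \<bullet> w) * exp (\<beta> t))
        (at t within {0..})"
      unfolding E_def
      by (intro DERIV_add DERIV_mult DERIV_cmult bregman_has_real_derivative[OF g_grad Z flow]
          has_real_derivative_gradient_compose[OF f_grad[of "Z t"] Z] DERIV_chain2[OF DERIV_exp \<beta>_deriv]
          \<open>0 \<le> t\<close>)
    moreover have "exp (\<beta> t) * d\<beta> t * ?P + (\<mu> * ((- ?c *\<^sub>R ?d) \<bullet> (Z t - 0)) + ?d \<bullet> w) * exp (\<beta> t)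
        = exp (\<beta> t) * (d\<beta> t * ?P - exp (\<alpha> t) * (?d \<bullet> Z t) + ?d \<bullet> w)"
      using \<mu>_pos by (simp add: algebra_simps)
    moreover have "d\<beta> t * ?P - exp (\<alpha> t) * (?d \<bullet> Z t) + ?d \<bullet> w \<le> 0"
    proof -
      have "0 \<le> bregman g gradg 0 (Z t)" by (rule bregman_nonneg[OF g_convex g_grad])
      then have "d\<beta> t * ?P \<le> exp (\<alpha> t) * ?P"
        using d\<beta>_le[OF \<open>0 \<le> t\<close>] f_nonneg[of "Z t"] \<mu>_pos by (intro mult_right_mono) simp_all
      moreover have "?P \<le> ?d \<bullet> Z t"
        using uniformly_convex[of 0 "Z t"] f_zero by (simp add: bregman_def)
      then have "exp (\<alpha> t) * ?P \<le> exp (\<alpha> t) * (?d \<bullet> Z t)" by simp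
      ultimately show ?thesis using descent by linarith
    qed
    ultimately show "\<exists>D. (E has_real_derivative D) (at t within {0..}) \<and> D \<le> 0"
      by (metis mult_nonneg_nonpos exp_ge_zero)
  qed
  moreover have "f (Z t) \<le> exp (- \<beta> t) * E 0" if "0 \<le> t" for t
  proof (rule le_exp_neg_mult_if_exp_mult_le)
    have "0 \<le> bregman g gradg 0 (Z t)" by (rule bregman_nonneg[OF g_convex g_grad])
    then have "exp (\<beta> t) * f (Z t) \<le> E t" unfolding E_def using \<mu>_pos by simp
    also have "\<dots> \<le> E 0" using decreasing that by simp
    finally show "exp (\<beta> t) * f (Z t) \<le> E 0" .
  qed
  ultimately show ?thesis by blast
qed

theorem theorem4:
  fixes f g :: "'a::euclidean_space \<Rightarrow> real"
    and gradf gradg :: "'a \<Rightarrow> 'a"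
    and L :: real
    and \<alpha> \<beta> d\<beta> :: "real \<Rightarrow> real"
  assumes f_grad: "\<And>x. (f has_derivative (\<lambda>h. gradf x \<bullet> h)) (at x)"
    and f_C1: "continuous_on UNIV gradf"
    and f_convex: "convex_on UNIV f"
    and L_pos: "L > 0"
    and f_smooth: "\<And>x y. norm (gradf x - gradf y) \<le> L * norm (x - y)"
    and f_min: "\<And>x. f 0 \<le> f x"
    and f_unique_min: "\<And>x. f x = f 0 \<Longrightarrow> x = 0"
    and f_zero: "f 0 = 0"
    and g_grad: "\<And>x. (g has_derivative (\<lambda>h. gradg x \<bullet> h)) (at x)"
    and g_C1: "continuous_on UNIV gradg"
    and g_strict_convex: "strict_convex_on UNIV g"
    and \<beta>_deriv: "\<And>t. t \<ge> 0 \<Longrightarrow> (\<beta> has_real_derivative d\<beta> t) (at t within {0..})"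
    and \<alpha>\<beta>: "\<And>t. t \<ge> 0 \<Longrightarrow> exp (\<alpha> t) \<ge> d\<beta> t \<and> d\<beta> t > 0"
    and \<beta>_infty: "filterlim \<beta> at_top at_top"
  shows
    "(\<forall>Z :: real \<Rightarrow> 'a.
        (\<forall>t\<ge>0. Z differentiable (at t within {0..})) \<and>
        (\<forall>t\<ge>0. ((\<lambda>s. gradg (Z s)) has_vector_derivative
                  (- exp (\<alpha> t + \<beta> t)) *\<^sub>R gradf (Z t)) (at t within {0..}))
      \<longrightarrow> (let E = (\<lambda>t. bregman g gradg 0 (Z t) + exp (\<beta> t) * f (Z t)) in
            (\<forall>s t. 0 \<le> s \<longrightarrow> s \<le> t \<longrightarrow> E t \<le> E s) \<and>
            (\<forall>t\<ge>0. f (Z t) \<le> exp (- \<beta> t) * E 0)))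
     \<and>
     (\<forall>(\<mu>::real) (Z :: real \<Rightarrow> 'a).
        \<mu> > 0 \<and>
        (\<forall>x y. bregman f gradf x y \<ge> \<mu> * bregman g gradg x y) \<and>
        (\<forall>t\<ge>0. Z differentiable (at t within {0..})) \<and>
        (\<forall>t\<ge>0. ((\<lambda>s. gradg (Z s)) has_vector_derivative
                  (- (exp (\<alpha> t) / \<mu>)) *\<^sub>R gradf (Z t)) (at t within {0..}))
      \<longrightarrow> (let E = (\<lambda>t. exp (\<beta> t) * (\<mu> * bregman g gradg 0 (Z t) + f (Z t))) in
            (\<forall>s t. 0 \<le> s \<longrightarrow> s \<le> t \<longrightarrow> E t \<le> E s) \<and>
            (\<forall>t\<ge>0. f (Z t) \<le> exp (- \<beta> t) * E 0)))"
proof -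
  have g_convex: "convex_on UNIV g"
    by (rule strict_convex_on_imp_convex_on[OF convex_UNIV g_strict_convex])
  have f_nonneg: "0 \<le> f x" for x
    using f_min[of x] f_zero by simp
  have d\<beta>_le: "d\<beta> t \<le> exp (\<alpha> t)" if "0 \<le> t" for t
    using \<alpha>\<beta>[OF that] by simp
  show ?thesis
    unfolding Let_def
    apply (rule conjI; intro allI impI; elim conjE)
    subgoal for Z
      by (rule mirror_flow_energy_convex[OF f_grad f_convex f_nonneg f_zero g_grad g_convex \<beta>_deriv d\<beta>_le])
        simp_all
    subgoal for \<mu> Z
      by (rule mirror_flow_energy_uniformly_convex[OF f_grad f_nonneg f_zero g_grad g_convex _ _ \<beta>_deriv d\<beta>_le])
        simp_all
    done
qed

end
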